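(* Let $E$ be a real affine space of dimension $n\ge1$ with a system of coordinates $\mathcal L=(\ell_1,\dots,\ell_n)$. Let $(\mu^p)$ be a sequence in $\mathcal M(E)$ converging narrowly to $\mu\in\mathcal M(E)$. If all the measures $\mu^p$ have a common center $x$ with respect to $\mathcal L$, then $x$ is also a center of $\mu$ with respect to $\mathcal L$.
   Context: $\vec E$ is the vector space of $E$. A partition of $E$ is a collection of subsets covering $E$ whose distinct members have disjoint interiors. Yao-Yao partitions and their centers are defined by induction on dimension: if $E=\{x\}$, the Yao-Yao partition is $\{\{x\}\}$, with center $x$; if $\dim E=n\ge1$, $\mathcal P$ is a Yao-Yao partition of $E$ with center $x$ if there exist an affine hyperplane $F$, a vector $v\in\vec E\setminus\vec F$ and two Yao-Yao partitions $\mathcal P_1,\mathcal P_{-1}$ of $F$ with the same center $x$ such that $\mathcal P=\{A+\mathbb R_-v: A\in\mathcal P_{-1}\}\cup\{A+\mathbb R_+v: A\in\mathcal P_1\}$. A system of coordinates is a family $(\ell_1,\dots,\ell_n)$ of affine forms such that $x\mapsto(\ell_i(x))_i$ is a bijection $E\to\mathbb R^n$; write $x_i=\ell_i(x)$. Such a partition, given by $F,v,x,\mathcal P_1,\mathcal P_{-1}$, is adapted to $(\ell_1,\dots,\ell_n)$ if $F=\{z: z_1=x_1\}$ and $\mathcal P_1,\mathcal P_{-1}$ are adapted to $(\ell_2|_F,\dots,\ell_n|_F)$ (in dimension $0$ every Yao-Yao partition is adapted). $\mathcal M(E)$ is the set of finite non-negative Borel measures on $E$ vanishing on every affine hyperplane.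 A Yao-Yao equipartition for $\mu$ is a Yao-Yao partition $\mathcal P$ with $\mu(A)=2^{-n}\mu(E)$ for all $A\in\mathcal P$. A center of $\mu$ with respect to $\mathcal L$ is the center of a Yao-Yao equipartition for $\mu$ adapted to $\mathcal L$. A sequence $(\mu^p)$ converges narrowly to $\mu$ if $\int\phi\,d\mu^p\to\int\phi\,d\mu$ for every bounded continuous function $\phi$ on $E$. *)

theory Defs
  imports "HOL-Probability.Probability"
begin

text \<open>The ambient real affine space E is modelled by a Euclidean space type 'a
  (viewed as an affine space); its vector space is 'a itself.\<close>

definition affine_form :: "('a::real_vector \<Rightarrow> real) \<Rightarrow> bool" where
  "affine_form l \<longleftrightarrow> (\<exists>f c. linear f \<and> (\<forall>z. l z = f z + c))"

definition coord_system :: "('a::real_vector \<Rightarrow> real) list \<Rightarrow> bool" where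
  "coord_system Ls \<longleftrightarrow> (\<forall>l\<in>set Ls. affine_form l) \<and>
     bij_betw (\<lambda>z. map (\<lambda>l. l z) Ls) UNIV {xs :: real list. length xs = length Ls}"

definition ray_sum :: "'a::real_vector set \<Rightarrow> 'a \<Rightarrow> 'a set" where
  "ray_sum A v = {a + t *\<^sub>R v | a t. a \<in> A \<and> t \<ge> 0}"

text \<open>yy_adapted S Ls x P: P is a Yao-Yao partition of the affine subspace S with
  center x, adapted to the coordinates Ls (restricted to S).  In the step,
  F = {z in S. z_1 = x_1}; the vector v lies in vec S (x + v in S) but not in
  vec F (l(x+v) \<noteq> l x); P_1 and P_{-1} are Yao-Yao partitions of F with center x
  adapted to the remaining coordinates restricted to F.  The Yao-Yao partition is
  {A + R_- v : A in P_{-1}} \<union> {A + R_+ v : A in P_1}, and A + R_- v = A + R_+ (-v).\<close>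
inductive yy_adapted :: "'a::real_vector set \<Rightarrow> ('a \<Rightarrow> real) list \<Rightarrow> 'a \<Rightarrow> 'a set set \<Rightarrow> bool"
  where
  base: "yy_adapted {x} [] x {{x}}"
| step: "\<lbrakk> x \<in> S; x + v \<in> S; l (x + v) \<noteq> l x; F = {z \<in> S. l z = l x};
           yy_adapted F Ls x P1; yy_adapted F Ls x Pm1;
           P = (\<lambda>A. ray_sum A (- v)) ` Pm1 \<union> (\<lambda>A. ray_sum A v) ` P1 \<rbrakk>
         \<Longrightarrow> yy_adapted S (l # Ls) x P"

definition meas_M :: "'a::euclidean_space measure \<Rightarrow> bool" where
  "meas_M \<mu> \<longleftrightarrow> sets \<mu> = sets borel \<and> finite_measure \<mu> \<and>
     (\<forall>a b. a \<noteq> 0 \<longrightarrow> emeasure \<mu> {z. a \<bullet> z = b} = 0)"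

definition narrow_conv :: "(nat \<Rightarrow> 'a::euclidean_space measure) \<Rightarrow> 'a measure \<Rightarrow> bool" where
  "narrow_conv \<mu>s \<mu> \<longleftrightarrow> (\<forall>\<phi> :: 'a \<Rightarrow> real. continuous_on UNIV \<phi> \<and> bounded (range \<phi>) \<longrightarrow>
     (\<lambda>p. integral\<^sup>L (\<mu>s p) \<phi>) \<longlonglongrightarrow> integral\<^sup>L \<mu> \<phi>)"

definition yy_equipartition :: "'a::euclidean_space measure \<Rightarrow> 'a set set \<Rightarrow> bool" where
  "yy_equipartition \<mu> P \<longleftrightarrow>
     (\<forall>A\<in>P. measure \<mu> A = measure \<mu> UNIV / 2 ^ DIM('a))"

definition is_center :: "'a::euclidean_space measure \<Rightarrow> ('a \<Rightarrow> real) list \<Rightarrow> 'a \<Rightarrow> bool" where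
  "is_center \<mu> Ls x \<longleftrightarrow> (\<exists>P. yy_adapted UNIV Ls x P \<and> yy_equipartition \<mu> P)"

end

theory Submission
  imports Defs
begin

text \<open>The proof is by induction on the number of coordinates, for measures carried by an affine
  subspace \<open>S\<close> through \<open>x\<close>. An adapted Yao-Yao partition is given by a direction \<open>w\<close>, normalised
  by \<open>\<ell>\<^sub>1(x + w) = \<ell>\<^sub>1(x) + 1\<close>, and two adapted partitions of the section \<open>F = {\<ell>\<^sub>1 = \<ell>\<^sub>1(x)}\<close>;
  its cells \<open>A + \<real>\<^sub>\<plusminus> w\<close> are the preimages of the cells \<open>A\<close> of \<open>F\<close> under the projection onto \<open>F\<close>
  along \<open>w\<close>, restricted to a half-space. The directions \<open>w\<^sub>p\<close> belonging to the \<open>\<mu>\<^sup>p\<close> stay bounded, so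
  along a subsequence they converge to some \<open>w\<close>. Since \<open>\<mu>\<close> does not charge the boundary hyperplane,
  the projections of the two halves of \<open>\<mu>\<^sup>p\<close> along \<open>w\<^sub>p\<close> converge narrowly to those of \<open>\<mu>\<close> along \<open>w\<close>,
  and the induction hypothesis on \<open>F\<close> yields the two partitions of the section for \<open>\<mu>\<close>.\<close>

section \<open>Affine forms, rays and projections\<close>

lemma affine_form_inner:
  fixes l :: "'a::euclidean_space \<Rightarrow> real"
  assumes "affine_form l"
  obtains a c where "\<And>z. l z = a \<bullet> z + c"
proof -
  obtain f c where f: "linear f" "\<And>z. l z = f z + c"
    using assms unfolding affine_form_def by blast
  have "f z = adjoint f 1 \<bullet> z" for z
    using adjoint_works[OF f(1), of z 1] by (simp add: inner_commute)
  then show thesis using f(2) by (intro that[of "adjoint f 1" c]) simp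
qed

lemma affine_form_inner_plus: "affine_form (\<lambda>z. a \<bullet> z + c)"
  unfolding affine_form_def
  by (intro exI[of _ "inner a"] exI[of _ c]) (simp add: bounded_linear.linear[OF bounded_linear_inner_right])

lemma continuous_on_affine_form:
  fixes l :: "'a::euclidean_space \<Rightarrow> real"
  assumes "affine_form l"
  shows "continuous_on S l"
proof -
  obtain a c where "\<And>z. l z = a \<bullet> z + c" using affine_form_inner[OF assms] by blast
  then have "l = (\<lambda>z. a \<bullet> z + c)" by auto
  then show ?thesis by (simp add: continuous_on_add continuous_on_inner continuous_on_const continuous_on_id)
qed

lemma affine_level_set:
  fixes l :: "'a::euclidean_space \<Rightarrow> real"
  assumes "affine S" "affine_form l"
  shows "affine {z\<in>S. l z = d}"
proof -
  obtain a c where l: "\<And>z. l z = a \<bullet> z + c" using affine_form_inner[OF assms(2)] by blast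
  have "{z\<in>S. l z = d} = S \<inter> {z. a \<bullet> z = d - c}" by (auto simp: l)
  then show ?thesis using affine_Int[OF assms(1) affine_hyperplane] by simp
qed

lemma ray_sum_scaleR:
  assumes "s > 0"
  shows "ray_sum A (s *\<^sub>R v) = ray_sum A v"
proof -
  have "a + t *\<^sub>R (s *\<^sub>R v) \<in> ray_sum A v" if "a \<in> A" "t \<ge> 0" for a t
    using that assms unfolding ray_sum_def by (intro CollectI exI[of _ a] exI[of _ "t * s"]) simp
  moreover have "a + t *\<^sub>R v \<in> ray_sum A (s *\<^sub>R v)" if "a \<in> A" "t \<ge> 0" for a t
    using that assms unfolding ray_sum_def by (intro CollectI exI[of _ a] exI[of _ "t / s"]) simp
  ultimately show ?thesis unfolding ray_sum_def by blast
qed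

lemma ray_sum_subset_affine:
  assumes "affine S" "A \<subseteq> S" "x \<in> S" "x + v \<in> S"
  shows "ray_sum A v \<subseteq> S"
proof
  fix z assume "z \<in> ray_sum A v"
  then obtain y t where "z = y + t *\<^sub>R v" "y \<in> A" unfolding ray_sum_def by auto
  then show "z \<in> S"
    using mem_affine_3_minus[OF assms(1) _ assms(4,3), of y t] assms(2) by auto
qed

text \<open>For \<open>a \<bullet> w = 1\<close>, the projection onto the hyperplane \<open>{z. a \<bullet> (z - x) = 0}\<close> along \<open>w\<close>.\<close>
definition proj_along :: "'a::real_inner \<Rightarrow> 'a \<Rightarrow> 'a \<Rightarrow> 'a \<Rightarrow> 'a" where
  "proj_along a x w z = z - (a \<bullet> (z - x)) *\<^sub>R w"

lemma proj_along_hyperplane: "a \<bullet> w = 1 \<Longrightarrow> a \<bullet> (proj_along a x w z - x) = 0"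
  by (simp add: proj_along_def inner_diff_right algebra_simps)

lemma proj_along_fixed: "a \<bullet> (z - x) = 0 \<Longrightarrow> proj_along a x w z = z"
  by (simp add: proj_along_def)

lemma proj_along_in_affine:
  assumes "affine S" "x \<in> S" "x + w \<in> S" "z \<in> S"
  shows "proj_along a x w z \<in> S"
  using mem_affine_3_minus[OF assms(1,4,3,2), of "- (a \<bullet> (z - x))"] by (simp add: proj_along_def)

lemma continuous_on_proj_along: "continuous_on S (proj_along a x w)"
  unfolding proj_along_def by (intro continuous_intros)

lemma ray_sum_eq_proj_along:
  assumes aw: "a \<bullet> w = 1" and A: "\<And>y. y \<in> A \<Longrightarrow> a \<bullet> (y - x) = 0" and \<sigma>: "\<sigma> = 1 \<or> \<sigma> = -1"
  shows "ray_sum A (\<sigma> *\<^sub>R w) = {z. \<sigma> * (a \<bullet> (z - x)) \<ge> 0 \<and> proj_along a x w z \<in> A}"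
proof (intro set_eqI iffI)
  fix z assume "z \<in> ray_sum A (\<sigma> *\<^sub>R w)"
  then obtain y t where z: "z = y + t *\<^sub>R (\<sigma> *\<^sub>R w)" "y \<in> A" "t \<ge> 0"
    unfolding ray_sum_def by auto
  have "a \<bullet> (z - x) = \<sigma> * t"
    using z A[OF z(2)] aw by (simp add: inner_diff_right inner_add_right algebra_simps)
  then show "z \<in> {z. \<sigma> * (a \<bullet> (z - x)) \<ge> 0 \<and> proj_along a x w z \<in> A}"
    using z \<sigma> by (elim disjE) (auto simp: proj_along_def)
next
  fix z assume z: "z \<in> {z. \<sigma> * (a \<bullet> (z - x)) \<ge> 0 \<and> proj_along a x w z \<in> A}"
  have "z = proj_along a x w z + (\<sigma> * (a \<bullet> (z - x))) *\<^sub>R (\<sigma> *\<^sub>R w)"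
    using \<sigma> by (elim disjE) (simp_all add: proj_along_def)
  then show "z \<in> ray_sum A (\<sigma> *\<^sub>R w)" using z unfolding ray_sum_def by blast
qed

lemma ray_sum_Int_hyperplane:
  assumes "a \<bullet> w = 1" "\<And>y. y \<in> A \<Longrightarrow> a \<bullet> (y - x) = 0" "\<sigma> = 1 \<or> \<sigma> = -1"
  shows "ray_sum A (\<sigma> *\<^sub>R w) \<inter> {z. a \<bullet> (z - x) = 0} = A"
proof -
  have "ray_sum A (\<sigma> *\<^sub>R w) = {z. \<sigma> * (a \<bullet> (z - x)) \<ge> 0 \<and> proj_along a x w z \<in> A}"
    using assms by (rule ray_sum_eq_proj_along)
  then show ?thesis using assms(2) by (auto simp: proj_along_fixed)
qed

lemma affine_form_proj_along:
  fixes g :: "'a::euclidean_space \<Rightarrow> real"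
  assumes "affine_form g"
  shows "affine_form (\<lambda>z. g (proj_along a x w z))"
proof -
  obtain b c where g: "\<And>z. g z = b \<bullet> z + c" using affine_form_inner[OF assms] by blast
  have "(\<lambda>z. g (proj_along a x w z)) = (\<lambda>z. (b - (b \<bullet> w) *\<^sub>R a) \<bullet> z + ((b \<bullet> w) * (a \<bullet> x) + c))"
    by (simp add: g proj_along_def inner_diff_left inner_diff_right algebra_simps)
  then show ?thesis by (simp add: affine_form_inner_plus)
qed

lemma uniform_limit_proj_along:
  fixes a x :: "'a::euclidean_space"
  assumes "ws \<longlonglongrightarrow> w0"
  shows "uniform_limit (cball x R) (\<lambda>j. proj_along a x (ws j)) (proj_along a x w0) sequentially"
  unfolding proj_along_def
proof (intro uniform_limit_intros)
  show "uniform_limit (cball x R) (\<lambda>j z. ws j) (\<lambda>z. w0) sequentially"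
    by (rule uniform_limitI) (use assms in \<open>simp add: tendsto_iff\<close>)
  show "bounded ((\<lambda>z. w0) ` cball x R)" by (rule bounded_subset[of "{w0}"]) auto
  show "bounded ((\<lambda>z. a \<bullet> (z - x)) ` cball x R)"
    by (intro compact_imp_bounded compact_continuous_image continuous_intros) auto
qed

lemma uniform_limit_compose_continuous:
  fixes g :: "nat \<Rightarrow> 'a::metric_space \<Rightarrow> 'b::euclidean_space" and \<phi> :: "'b \<Rightarrow> 'c::metric_space"
  assumes lim: "uniform_limit K g g' sequentially" and K: "compact K" and g': "continuous_on K g'"
    and \<phi>: "continuous_on UNIV \<phi>"
  shows "uniform_limit K (\<lambda>j z. \<phi> (g j z)) (\<lambda>z. \<phi> (g' z)) sequentially"
proof -
  define B where "B = {y + e | y e. y \<in> g' ` K \<and> e \<in> cball 0 1}"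
  have "compact B" unfolding B_def
    using K g' by (intro compact_sums compact_continuous_image) auto
  then have uc: "uniformly_continuous_on B \<phi>"
    using \<phi> by (intro compact_uniformly_continuous) (auto intro: continuous_on_subset)
  have ev: "\<forall>\<^sub>F j in sequentially. \<forall>z\<in>K. g j z \<in> B"
    using uniform_limitD[OF lim zero_less_one]
  proof eventually_elim
    case (elim j)
    have "g j z = g' z + (g j z - g' z) \<and> g j z - g' z \<in> cball 0 1" if "z \<in> K" for z
      using elim that by (simp add: dist_norm norm_minus_commute less_imp_le)
    then show ?case unfolding B_def by blast
  qed
  show ?thesis
    using uniform_limit_compose_uniformly_continuous_on[OF lim uc ev compact_imp_closed[OF \<open>compact B\<close>]] .
qed

section \<open>Structure of adapted Yao-Yao partitions\<close>

lemma yy_adapted_NilD: "yy_adapted S [] x P \<Longrightarrow> S = {x} \<and> P = {{x}}"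
  by (cases rule: yy_adapted.cases) auto

lemma yy_adapted_subset:
  fixes Ls :: "('a::euclidean_space \<Rightarrow> real) list"
  assumes "yy_adapted S Ls x P" "affine S" "\<forall>l\<in>set Ls. affine_form l"
  shows "x \<in> S \<and> (\<forall>A\<in>P. A \<subseteq> S)"
  using assms
proof (induction rule: yy_adapted.induct)
  case (base x)
  then show ?case by auto
next
  case (step x S v l F Ls P1 Pm1 P)
  have "affine F" using step.prems step.hyps(4) affine_level_set by auto
  then have cells: "\<forall>A\<in>P1 \<union> Pm1. A \<subseteq> S" using step by auto
  have "x + - v \<in> S" using mem_affine_3_minus[OF step.prems(1) step.hyps(1,2,1), of "-1"] by simp
  then have "ray_sum A (- v) \<subseteq> S" if "A \<in> Pm1" for A
    using ray_sum_subset_affine[OF step.prems(1) _ step.hyps(1)] cells that by auto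
  moreover have "ray_sum A v \<subseteq> S" if "A \<in> P1" for A
    using ray_sum_subset_affine[OF step.prems(1) _ step.hyps(1,2)] cells that by auto
  ultimately show ?case using step.hyps(1,7) by blast
qed

lemma yy_adapted_cell_in_halfspace:
  fixes u :: "'a::real_inner"
  assumes "yy_adapted S Ls x P"
  shows "\<exists>A\<in>P. \<forall>y\<in>A. u \<bullet> (y - x) \<ge> 0"
  using assms
proof (induction rule: yy_adapted.induct)
  case (base x)
  then show ?case by auto
next
  case (step x S v l F Ls P1 Pm1 P)
  have ray: "u \<bullet> (z - x) \<ge> 0"
    if z: "z \<in> ray_sum A w" and uw: "u \<bullet> w \<ge> 0" and A: "\<forall>y\<in>A. u \<bullet> (y - x) \<ge> 0" for z A w
  proof -
    obtain y t where "z = y + t *\<^sub>R w" "y \<in> A" "t \<ge> 0" using z unfolding ray_sum_def by auto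
    moreover from this have "u \<bullet> (z - x) = u \<bullet> (y - x) + t * (u \<bullet> w)"
      by (simp add: inner_diff_right inner_add_right)
    ultimately show ?thesis using uw A by simp
  qed
  show ?case
  proof (cases "u \<bullet> v \<ge> 0")
    case True
    then obtain A where "A \<in> P1" "\<forall>y\<in>A. u \<bullet> (y - x) \<ge> 0" using step.IH by blast
    then show ?thesis using ray[of _ A v] True step.hyps(7) by blast
  next
    case False
    then obtain A where "A \<in> Pm1" "\<forall>y\<in>A. u \<bullet> (y - x) \<ge> 0" using step.IH by blast
    then show ?thesis using ray[of _ A "- v"] False step.hyps(7) by auto
  qed
qed

lemma yy_adapted_ConsE:
  fixes a :: "'a::euclidean_space"
  assumes yy: "yy_adapted S (l # Ls) x P" and S: "affine S" and l: "\<And>z. l z = a \<bullet> z + k"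
  obtains w Q1 Qm1 where "x + w \<in> S" "a \<bullet> w = 1"
    "yy_adapted {z\<in>S. l z = l x} Ls x Q1" "yy_adapted {z\<in>S. l z = l x} Ls x Qm1"
    "P = (\<lambda>A. ray_sum A (- w)) ` Qm1 \<union> (\<lambda>A. ray_sum A w) ` Q1"
  using yy
proof (cases rule: yy_adapted.cases)
  case (step v F P1 Pm1)
  have av: "a \<bullet> v \<noteq> 0" using step(3) by (simp add: l inner_add_right)
  define w where "w = (1 / (a \<bullet> v)) *\<^sub>R v"
  have "x + w \<in> S"
    using mem_affine_3_minus[OF S step(1,2,1), of "1 / (a \<bullet> v)"] by (simp add: w_def)
  moreover have aw: "a \<bullet> w = 1" using av by (simp add: w_def)
  ultimately show thesis
  proof (cases "a \<bullet> v > 0")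
    case True
    then have "ray_sum A w = ray_sum A v" "ray_sum A (- w) = ray_sum A (- v)" for A
      using ray_sum_scaleR[of "1 / (a \<bullet> v)" A v] ray_sum_scaleR[of "1 / (a \<bullet> v)" A "- v"]
      by (simp_all add: w_def)
    then show thesis using that[of w P1 Pm1] \<open>x + w \<in> S\<close> aw step by simp
  next
    case False
    then have neg: "- 1 / (a \<bullet> v) > 0" using av by (simp add: field_simps)
    have w1: "w = (- 1 / (a \<bullet> v)) *\<^sub>R (- v)" and w2: "- w = (- 1 / (a \<bullet> v)) *\<^sub>R v"
      by (simp_all add: w_def)
    have "ray_sum A w = ray_sum A (- v)" "ray_sum A (- w) = ray_sum A v" for A
      by (metis w1 ray_sum_scaleR[OF neg]) (metis w2 ray_sum_scaleR[OF neg])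
    then show thesis using that[of w Pm1 P1] \<open>x + w \<in> S\<close> aw step by (simp add: Un_commute)
  qed
qed

section \<open>Finite Borel measures and narrow convergence\<close>

definition finite_borel :: "'a::topological_space measure \<Rightarrow> bool" where
  "finite_borel M \<longleftrightarrow> sets M = sets borel \<and> finite_measure M"

lemma meas_M_finite_borel: "meas_M \<mu> \<Longrightarrow> finite_borel \<mu>"
  unfolding meas_M_def finite_borel_def by auto

lemma finite_borel_space: "finite_borel M \<Longrightarrow> space M = UNIV"
  unfolding finite_borel_def by (metis sets_eq_imp_space_eq space_borel)

lemma finite_borel_measurable:
  "finite_borel M \<Longrightarrow> f \<in> borel_measurable borel \<Longrightarrow> f \<in> borel_measurable M"
  unfolding finite_borel_def using measurable_cong_sets by blast

lemma finite_borel_measure_mono: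
  assumes "finite_borel M" "A \<subseteq> B" "B \<in> sets borel"
  shows "measure M A \<le> measure M B"
proof -
  interpret finite_measure M using assms(1) unfolding finite_borel_def by simp
  show ?thesis using assms unfolding finite_borel_def by (intro finite_measure_mono) auto
qed

lemma integrable_finite_borel:
  fixes f :: "'a::topological_space \<Rightarrow> real"
  assumes "finite_borel M" "f \<in> borel_measurable borel" "\<And>z. \<bar>f z\<bar> \<le> B"
  shows "integrable M f"
proof -
  interpret finite_measure M using assms(1) unfolding finite_borel_def by simp
  show ?thesis
    using assms finite_borel_measurable by (intro integrable_const_bound[of _ B]) auto
qed

lemma integral_indicator_finite_borel:
  assumes "finite_borel M" "A \<in> sets borel"
  shows "integrable M (indicator A :: _ \<Rightarrow> real)" "integral\<^sup>L M (indicator A) = measure M A"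
  using assms finite_borel_space[OF assms(1)]
  by (auto intro!: integrable_finite_borel[where B=1] simp: indicator_def finite_borel_def)

lemma integral_le_measure_finite_borel:
  fixes f :: "'a::topological_space \<Rightarrow> real"
  assumes M: "finite_borel M" and f: "f \<in> borel_measurable borel" "\<And>z. \<bar>f z\<bar> \<le> B"
    and A: "A \<in> sets borel" "\<And>z. f z \<le> indicator A z"
  shows "integral\<^sup>L M f \<le> measure M A"
  using integral_mono[OF integrable_finite_borel[OF M f] integral_indicator_finite_borel(1)[OF M A(1)] A(2)]
  by (simp add: integral_indicator_finite_borel(2)[OF M A(1)] finite_borel_space[OF M])

lemma measure_le_integral_finite_borel:
  fixes f :: "'a::topological_space \<Rightarrow> real"
  assumes M: "finite_borel M" and f: "f \<in> borel_measurable borel" "\<And>z. \<bar>f z\<bar> \<le> B"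
    and A: "A \<in> sets borel" "\<And>z. indicator A z \<le> f z"
  shows "measure M A \<le> integral\<^sup>L M f"
  using integral_mono[OF integral_indicator_finite_borel(1)[OF M A(1)] integrable_finite_borel[OF M f] A(2)]
  by (simp add: integral_indicator_finite_borel(2)[OF M A(1)] finite_borel_space[OF M])

lemma abs_integral_diff_le_finite_borel:
  fixes f g :: "'a::topological_space \<Rightarrow> real"
  assumes M: "finite_borel M" and f: "f \<in> borel_measurable borel" "\<And>z. \<bar>f z\<bar> \<le> B"
    and g: "g \<in> borel_measurable borel" "\<And>z. \<bar>g z\<bar> \<le> B" and A: "A \<in> sets borel"
    and le: "\<And>z. \<bar>f z - g z\<bar> \<le> \<epsilon> + c * indicator A z"
  shows "\<bar>integral\<^sup>L M f - integral\<^sup>L M g\<bar> \<le> \<epsilon> * measure M UNIV + c * measure M A"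
proof -
  have intf: "integrable M f" and intg: "integrable M g"
    using integrable_finite_borel[OF M] f g by blast+
  have i\<epsilon>: "integrable M (\<lambda>_. \<epsilon>)" using integrable_finite_borel[OF M, of "\<lambda>_. \<epsilon>" "\<bar>\<epsilon>\<bar>"] by simp
  have iI: "integrable M (\<lambda>z. c * indicator A z)"
    using integral_indicator_finite_borel(1)[OF M A] by (rule integrable_mult_right)
  have iA: "integrable M (\<lambda>z. \<epsilon> + c * indicator A z)" using i\<epsilon> iI by (rule Bochner_Integration.integrable_add)
  have "\<bar>integral\<^sup>L M f - integral\<^sup>L M g\<bar> = \<bar>integral\<^sup>L M (\<lambda>z. f z - g z)\<bar>"
    using intf intg by simp
  also have "\<dots> \<le> integral\<^sup>L M (\<lambda>z. \<bar>f z - g z\<bar>)"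
    by (rule integral_abs_bound)
  also have "\<dots> \<le> integral\<^sup>L M (\<lambda>z. \<epsilon> + c * indicator A z)"
    using intf intg iA le by (intro integral_mono) auto
  also have "\<dots> = integral\<^sup>L M (\<lambda>_. \<epsilon>) + c * integral\<^sup>L M (indicator A)"
    using Bochner_Integration.integral_add[OF i\<epsilon> iI] by simp
  also have "\<dots> = \<epsilon> * measure M UNIV + c * measure M A"
    using integral_indicator_finite_borel(2)[OF M A] finite_borel_space[OF M] by simp
  finally show ?thesis .
qed

lemma finite_borel_decseq_measure_less:
  assumes M: "finite_borel M" and A: "\<And>n. A n \<in> sets borel" "decseq A"
    and less: "measure M (\<Inter>n. A n) < e"
  shows "\<exists>n. measure M (A n) < e"
proof -
  interpret finite_measure M using M unfolding finite_borel_def by simp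
  have "(\<lambda>n. measure M (A n)) \<longlonglongrightarrow> measure M (\<Inter>n. A n)"
    using A M unfolding finite_borel_def by (intro finite_Lim_measure_decseq) auto
  then have "\<forall>\<^sub>F n in sequentially. measure M (A n) < e" using less by (rule order_tendstoD(2))
  then show ?thesis by (auto simp: eventually_sequentially)
qed

lemma narrow_conv_subseq:
  assumes "narrow_conv \<nu>s \<nu>" "strict_mono s"
  shows "narrow_conv (\<lambda>j. \<nu>s (s j)) \<nu>"
  using assms LIMSEQ_subseq_LIMSEQ unfolding narrow_conv_def comp_def by blast

lemma narrow_conv_total_mass:
  assumes "narrow_conv \<nu>s \<nu>" "\<And>j. finite_borel (\<nu>s j)" "finite_borel \<nu>"
  shows "(\<lambda>j. measure (\<nu>s j) UNIV) \<longlonglongrightarrow> measure \<nu> UNIV"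
proof -
  have "continuous_on UNIV (\<lambda>_::'a. 1::real)" "bounded (range (\<lambda>_::'a. 1::real))" by auto
  then have "(\<lambda>j. integral\<^sup>L (\<nu>s j) (\<lambda>_. 1::real)) \<longlonglongrightarrow> integral\<^sup>L \<nu> (\<lambda>_. 1::real)"
    using assms(1) unfolding narrow_conv_def by blast
  then show ?thesis by (simp add: finite_borel_space[OF assms(2)] finite_borel_space[OF assms(3)])
qed

text \<open>The portmanteau inequality for the closed set \<open>{q \<le> 0}\<close>, witnessed through its open
  neighbourhood \<open>{q < d}\<close>.\<close>
lemma narrow_conv_eventually_measure_less:
  fixes q :: "'a::euclidean_space \<Rightarrow> real"
  assumes nc: "narrow_conv \<nu>s \<nu>" and fs: "\<And>j. finite_borel (\<nu>s j)" and f: "finite_borel \<nu>"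
    and q: "continuous_on UNIV q" and d: "d > 0" and small: "measure \<nu> {z. q z < d} < e"
  shows "\<forall>\<^sub>F j in sequentially. measure (\<nu>s j) {z. q z \<le> 0} < e"
proof -
  define \<phi> where "\<phi> z = max 0 (min 1 (1 - q z / d))" for z
  have \<phi>c: "continuous_on UNIV \<phi>" unfolding \<phi>_def using q d by (intro continuous_intros) auto
  then have \<phi>m: "\<phi> \<in> borel_measurable borel" by (rule borel_measurable_continuous_onI)
  have \<phi>b: "\<bar>\<phi> z\<bar> \<le> 1" for z unfolding \<phi>_def by auto
  then have "bounded (range \<phi>)" by (intro boundedI[of _ 1]) auto
  then have lim: "(\<lambda>j. integral\<^sup>L (\<nu>s j) \<phi>) \<longlonglongrightarrow> integral\<^sup>L \<nu> \<phi>"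
    using nc \<phi>c unfolding narrow_conv_def by auto
  have "{z. q z < d} \<in> sets borel"
    using q by (intro borel_open open_Collect_less continuous_intros) auto
  then have "integral\<^sup>L \<nu> \<phi> \<le> measure \<nu> {z. q z < d}"
    using d by (intro integral_le_measure_finite_borel[OF f \<phi>m \<phi>b]) (auto simp: \<phi>_def indicator_def)
  then have ev: "\<forall>\<^sub>F j in sequentially. integral\<^sup>L (\<nu>s j) \<phi> < e"
    using small by (intro order_tendstoD(2)[OF lim]) simp
  have "{z. q z \<le> 0} \<in> sets borel"
    using q by (intro borel_closed closed_Collect_le continuous_intros) auto
  then have le: "measure (\<nu>s j) {z. q z \<le> 0} \<le> integral\<^sup>L (\<nu>s j) \<phi>" for j
    using d by (intro measure_le_integral_finite_borel[OF fs \<phi>m \<phi>b]) (auto simp: \<phi>_def indicator_def divide_nonpos_pos)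
  from ev show ?thesis by (rule eventually_mono) (rule order.strict_trans1[OF le])
qed

lemma narrow_conv_tight:
  fixes x :: "'a::euclidean_space"
  assumes nc: "narrow_conv \<nu>s \<nu>" and fs: "\<And>j. finite_borel (\<nu>s j)" and f: "finite_borel \<nu>"
    and e: "e > 0"
  shows "\<exists>R. \<forall>\<^sub>F j in sequentially. measure (\<nu>s j) {z. R \<le> dist z x} < e"
proof -
  define A where "A n = {z. real n < dist z x}" for n :: nat
  have Ab: "A n \<in> sets borel" for n
    unfolding A_def by (intro borel_open open_Collect_less continuous_intros)
  have "decseq A" unfolding A_def decseq_def by auto
  moreover have "(\<Inter>n. A n) = {}"
  proof -
    have "\<not> (\<forall>n. real n < dist z x)" for z
      using reals_Archimedean2[of "dist z x"] by (meson less_asym)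
    then show ?thesis unfolding A_def by auto
  qed
  ultimately obtain n where "measure \<nu> (A n) < e"
    using finite_borel_decseq_measure_less[of \<nu> A e, OF f Ab] e by auto
  moreover have "A n = {z. (real n + 1) - dist z x < 1}" by (auto simp: A_def)
  ultimately have "measure \<nu> {z. (real n + 1) - dist z x < 1} < e" by simp
  moreover have "continuous_on UNIV (\<lambda>z. (real n + 1) - dist z x)" by (intro continuous_intros)
  ultimately have "\<forall>\<^sub>F j in sequentially. measure (\<nu>s j) {z. real n + 1 - dist z x \<le> 0} < e"
    using narrow_conv_eventually_measure_less[OF nc fs f _ zero_less_one] by blast
  then show ?thesis by (intro exI[of _ "real n + 1"]) simp
qed

lemma narrow_conv_thin_level:
  fixes g :: "'a::euclidean_space \<Rightarrow> real"
  assumes nc: "narrow_conv \<nu>s \<nu>" and fs: "\<And>j. finite_borel (\<nu>s j)" and f: "finite_borel \<nu>"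
    and e: "e > 0" and g: "continuous_on UNIV g" and g0: "measure \<nu> {z. g z = 0} = 0"
  obtains \<delta> where "\<delta> > 0" "measure \<nu> {z. \<bar>g z\<bar> \<le> \<delta>} < e"
    "\<forall>\<^sub>F j in sequentially. measure (\<nu>s j) {z. \<bar>g z\<bar> \<le> \<delta>} < e"
proof -
  define B where "B n = {z. \<bar>g z\<bar> < inverse (real n + 1)}" for n :: nat
  have Bb: "B n \<in> sets borel" for n
    unfolding B_def using g by (intro borel_open open_Collect_less continuous_intros) auto
  have "decseq B" unfolding B_def decseq_def
    by (auto elim!: order.strict_trans2 intro!: le_imp_inverse_le)
  moreover have "(\<Inter>n. B n) = {z. g z = 0}"
  proof -
    have "g z = 0" if small: "\<forall>n. \<bar>g z\<bar> < inverse (real n + 1)" for z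
    proof (rule ccontr)
      assume "g z \<noteq> 0"
      then obtain n where "inverse (real n + 1) < \<bar>g z\<bar>"
        using reals_Archimedean[of "\<bar>g z\<bar>"] by (auto simp: add.commute)
      then show False using small[rule_format, of n] by linarith
    qed
    then show ?thesis unfolding B_def by auto
  qed
  ultimately obtain n where n: "measure \<nu> (B n) < e"
    using finite_borel_decseq_measure_less[of \<nu> B e, OF f Bb] e g0 by auto
  define \<delta> where "\<delta> = inverse (real n + 1) / 2"
  have \<delta>: "\<delta> > 0" unfolding \<delta>_def by auto
  have Bn: "{z. \<bar>g z\<bar> - \<delta> < \<delta>} = B n" unfolding B_def \<delta>_def by auto
  moreover have "continuous_on UNIV (\<lambda>z. \<bar>g z\<bar> - \<delta>)" using g by (intro continuous_intros)
  ultimately have "\<forall>\<^sub>F j in sequentially. measure (\<nu>s j) {z. \<bar>g z\<bar> - \<delta> \<le> 0} < e"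
    using narrow_conv_eventually_measure_less[OF nc fs f _ \<delta>, of "\<lambda>z. \<bar>g z\<bar> - \<delta>" e] n by simp
  moreover have "{z. \<bar>g z\<bar> \<le> \<delta>} \<subseteq> {z. \<bar>g z\<bar> - \<delta> < \<delta>}" using \<delta> by auto
  then have "measure \<nu> {z. \<bar>g z\<bar> \<le> \<delta>} \<le> measure \<nu> (B n)"
    unfolding Bn using Bb by (intro finite_borel_measure_mono[OF f])
  ultimately show thesis using that[OF \<delta>] n by simp
qed

lemma abs_indicator_mult_cutoff_le:
  fixes t h :: "'a \<Rightarrow> real"
  assumes \<delta>: "\<delta> > 0" and h: "\<bar>h z\<bar> \<le> M"
  shows "\<bar>indicator {z. t z \<ge> 0} z * h z - max 0 (min 1 (1 + t z / \<delta>)) * h z\<bar>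
    \<le> M * indicator {z. \<bar>t z\<bar> \<le> \<delta>} z"
proof (cases "t z \<ge> 0")
  case True
  then show ?thesis using \<delta> h by (simp add: indicator_def)
next
  case False
  show ?thesis
  proof (cases "t z \<le> - \<delta>")
    case True
    then have "1 + t z / \<delta> \<le> 0" using \<delta> by (simp add: field_simps)
    then show ?thesis using False h by (simp add: indicator_def)
  next
    case False2: False
    have "\<bar>max 0 (min 1 (1 + t z / \<delta>)) * h z\<bar> \<le> 1 * M"
      unfolding abs_mult using h by (intro mult_mono) auto
    then show ?thesis using False False2 by (simp add: indicator_def)
  qed
qed

text \<open>The indicator of \<open>{t \<ge> 0}\<close> is replaced by a continuous cut-off which differs from it
  only on the slab \<open>{\<bar>t\<bar> \<le> \<delta>}\<close>, of small mass for \<open>\<nu>\<close> and eventually for all \<open>\<nu>s j\<close>.\<close>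
lemma narrow_conv_integral_indicator_mult:
  fixes t h :: "'a::euclidean_space \<Rightarrow> real"
  assumes nc: "narrow_conv \<nu>s \<nu>" and fs: "\<And>j. finite_borel (\<nu>s j)" and f: "finite_borel \<nu>"
    and h: "continuous_on UNIV h" "\<And>z. \<bar>h z\<bar> \<le> M"
    and t: "continuous_on UNIV t" and t0: "measure \<nu> {z. t z = 0} = 0"
  shows "(\<lambda>j. integral\<^sup>L (\<nu>s j) (\<lambda>z. indicator {z. t z \<ge> 0} z * h z))
           \<longlonglongrightarrow> integral\<^sup>L \<nu> (\<lambda>z. indicator {z. t z \<ge> 0} z * h z)"
proof (rule tendsto_iff[THEN iffD2], intro allI impI)
  fix r :: real assume r: "r > 0"
  have M0: "M \<ge> 0" using h(2)[of 0] by linarith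
  define e where "e = r / (4 * (M + 1))"
  have e: "e > 0" using r M0 unfolding e_def by auto
  obtain \<delta> where \<delta>: "\<delta> > 0" and small: "measure \<nu> {z. \<bar>t z\<bar> \<le> \<delta>} < e"
    and small_j: "\<forall>\<^sub>F j in sequentially. measure (\<nu>s j) {z. \<bar>t z\<bar> \<le> \<delta>} < e"
    using narrow_conv_thin_level[OF nc fs f e t t0] by blast
  define F where "F z = indicator {z. t z \<ge> 0} z * h z" for z
  define k where "k z = max 0 (min 1 (1 + t z / \<delta>)) * h z" for z
  have kc: "continuous_on UNIV k" unfolding k_def using t h \<delta> by (intro continuous_intros) auto
  have kb: "\<bar>k z\<bar> \<le> M" for z
  proof -
    have "\<bar>k z\<bar> = \<bar>max 0 (min 1 (1 + t z / \<delta>))\<bar> * \<bar>h z\<bar>" by (simp add: k_def abs_mult)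
    also have "\<dots> \<le> 1 * M" using h(2)[of z] by (intro mult_mono) auto
    finally show ?thesis by simp
  qed
  have Fb: "\<bar>F z\<bar> \<le> M" for z unfolding F_def using h(2)[of z] M0 by (auto simp: indicator_def)
  have km: "k \<in> borel_measurable borel" using kc by (rule borel_measurable_continuous_onI)
  have Fm: "F \<in> borel_measurable borel" unfolding F_def using t h
    by (intro borel_measurable_times borel_measurable_indicator borel_measurable_continuous_onI
        borel_closed closed_Collect_le continuous_on_const) auto
  have slab: "{z. \<bar>t z\<bar> \<le> \<delta>} \<in> sets borel"
    using t by (intro borel_closed closed_Collect_le continuous_intros) auto
  have Fk: "\<bar>F z - k z\<bar> \<le> 0 + M * indicator {z. \<bar>t z\<bar> \<le> \<delta>} z" for z
    using abs_indicator_mult_cutoff_le[where t=t and h=h, OF \<delta> h(2)] unfolding F_def k_def by simp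
  have "bounded (range k)" using kb by (intro boundedI[of _ M]) auto
  then have "(\<lambda>j. integral\<^sup>L (\<nu>s j) k) \<longlonglongrightarrow> integral\<^sup>L \<nu> k"
    using nc kc unfolding narrow_conv_def by auto
  then have "\<forall>\<^sub>F j in sequentially. dist (integral\<^sup>L (\<nu>s j) k) (integral\<^sup>L \<nu> k) < r / 2"
    using r by (intro tendsto_iff[THEN iffD1, rule_format]) auto
  then show "\<forall>\<^sub>F j in sequentially. dist (integral\<^sup>L (\<nu>s j) F) (integral\<^sup>L \<nu> F) < r"
    using small_j
  proof eventually_elim
    case (elim j)
    have "\<bar>integral\<^sup>L (\<nu>s j) F - integral\<^sup>L (\<nu>s j) k\<bar>
        \<le> 0 * measure (\<nu>s j) UNIV + M * measure (\<nu>s j) {z. \<bar>t z\<bar> \<le> \<delta>}"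
      by (rule abs_integral_diff_le_finite_borel[OF fs Fm Fb km kb slab Fk])
    moreover have "\<bar>integral\<^sup>L \<nu> F - integral\<^sup>L \<nu> k\<bar>
        \<le> 0 * measure \<nu> UNIV + M * measure \<nu> {z. \<bar>t z\<bar> \<le> \<delta>}"
      by (rule abs_integral_diff_le_finite_borel[OF f Fm Fb km kb slab Fk])
    moreover have "M * measure (\<nu>s j) {z. \<bar>t z\<bar> \<le> \<delta>} \<le> M * e"
      and "M * measure \<nu> {z. \<bar>t z\<bar> \<le> \<delta>} \<le> M * e"
      using elim(2) small M0 by (auto intro: mult_left_mono)
    moreover have "M * e < r / 4" using M0 r unfolding e_def by (simp add: field_simps)
    ultimately show ?case using elim(1) unfolding dist_real_def by linarith
  qed
qed

text \<open>Uniform convergence on balls suffices, since by tightness almost all the mass of the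
  \<open>\<nu>s j\<close> lies in a fixed ball.\<close>
lemma narrow_conv_integral_uniform_diff:
  fixes x :: "'a::euclidean_space" and gs :: "nat \<Rightarrow> 'a \<Rightarrow> real"
  assumes nc: "narrow_conv \<nu>s \<nu>" and fs: "\<And>j. finite_borel (\<nu>s j)" and f: "finite_borel \<nu>"
    and gs: "\<And>j. gs j \<in> borel_measurable borel" "\<And>j z. \<bar>gs j z\<bar> \<le> M"
    and g: "g \<in> borel_measurable borel" "\<And>z. \<bar>g z\<bar> \<le> M"
    and unif: "\<And>R. uniform_limit (cball x R) gs g sequentially"
  shows "(\<lambda>j. integral\<^sup>L (\<nu>s j) (gs j) - integral\<^sup>L (\<nu>s j) g) \<longlonglongrightarrow> 0"
proof (rule tendsto_iff[THEN iffD2], intro allI impI)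
  fix r :: real assume r: "r > 0"
  have M0: "M \<ge> 0" using g(2)[of 0] by linarith
  define m where "m = measure \<nu> UNIV + 1"
  have m: "m > 0" using measure_nonneg[of \<nu> UNIV] unfolding m_def by linarith
  have mass: "\<forall>\<^sub>F j in sequentially. measure (\<nu>s j) UNIV < m"
    using narrow_conv_total_mass[OF nc fs f] unfolding m_def by (auto intro: order_tendstoD(2))
  define e where "e = r / (4 * (M + 1))"
  have e: "e > 0" using r M0 unfolding e_def by auto
  obtain R where far: "\<forall>\<^sub>F j in sequentially. measure (\<nu>s j) {z. R \<le> dist z x} < e"
    using narrow_conv_tight[OF nc fs f e] by blast
  define \<epsilon> where "\<epsilon> = r / (4 * m)"
  have \<epsilon>: "\<epsilon> > 0" using r m unfolding \<epsilon>_def by auto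
  have near: "\<forall>\<^sub>F j in sequentially. \<forall>z\<in>cball x R. dist (gs j z) (g z) < \<epsilon>"
    using uniform_limitD[OF unif \<epsilon>] .
  have Ab: "{z. R \<le> dist z x} \<in> sets borel"
    by (intro borel_closed closed_Collect_le continuous_intros)
  show "\<forall>\<^sub>F j in sequentially. dist (integral\<^sup>L (\<nu>s j) (gs j) - integral\<^sup>L (\<nu>s j) g) 0 < r"
    using mass far near
  proof eventually_elim
    case (elim j)
    have "\<bar>gs j z - g z\<bar> \<le> \<epsilon> + 2 * M * indicator {z. R \<le> dist z x} z" for z
    proof (cases "R \<le> dist z x")
      case True
      then show ?thesis using gs(2)[of j z] g(2)[of z] \<epsilon> by (simp add: indicator_def)
    next
      case False
      then have "z \<in> cball x R" by (simp add: dist_commute)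
      then have "\<bar>gs j z - g z\<bar> < \<epsilon>" using elim(3) by (simp add: dist_real_def)
      then show ?thesis using False by (simp add: indicator_def)
    qed
    then have "\<bar>integral\<^sup>L (\<nu>s j) (gs j) - integral\<^sup>L (\<nu>s j) g\<bar>
        \<le> \<epsilon> * measure (\<nu>s j) UNIV + 2 * M * measure (\<nu>s j) {z. R \<le> dist z x}"
      by (rule abs_integral_diff_le_finite_borel[OF fs gs(1,2) g Ab])
    also have "\<dots> \<le> \<epsilon> * m + 2 * M * e"
      using elim(1,2) \<epsilon> M0 by (intro add_mono mult_left_mono) auto
    also have "\<dots> < r"
    proof -
      have "\<epsilon> * m = r / 4" unfolding \<epsilon>_def using m by simp
      moreover have "2 * M * e < r / 2" unfolding e_def using M0 r by (simp add: field_simps)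
      ultimately show ?thesis using r by linarith
    qed
    finally show ?case by (simp add: dist_real_def)
  qed
qed

definition restrict_distr :: "'a::topological_space measure \<Rightarrow> 'a set \<Rightarrow> ('a \<Rightarrow> 'b::topological_space) \<Rightarrow> 'b measure" where
  "restrict_distr M H p = distr (restrict_space M H) borel p"

lemma measurable_restrict_distr:
  "finite_borel M \<Longrightarrow> p \<in> borel_measurable borel \<Longrightarrow> p \<in> measurable (restrict_space M H) borel"
  by (rule measurable_restrict_space1[OF finite_borel_measurable])

lemma finite_borel_restrict_distr:
  assumes M: "finite_borel M" and H: "H \<in> sets borel" and p: "p \<in> borel_measurable borel"
  shows "finite_borel (restrict_distr M H p)"
proof -
  have "finite_measure (restrict_space M H)"
    using M H by (intro finite_measure_restrict_space) (auto simp: finite_borel_def)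
  then have "finite_measure (restrict_distr M H p)" unfolding restrict_distr_def
    using measurable_restrict_distr[OF M p] by (rule finite_measure.finite_measure_distr)
  then show ?thesis unfolding finite_borel_def restrict_distr_def by simp
qed

lemma integral_restrict_distr:
  fixes \<phi> :: "'a::topological_space \<Rightarrow> real"
  assumes M: "finite_borel M" and H: "H \<in> sets borel" and p: "p \<in> borel_measurable borel"
    and \<phi>: "\<phi> \<in> borel_measurable borel"
  shows "integral\<^sup>L (restrict_distr M H p) \<phi> = integral\<^sup>L M (\<lambda>z. indicator H z * \<phi> (p z))"
proof -
  have "integral\<^sup>L (restrict_distr M H p) \<phi> = integral\<^sup>L (restrict_space M H) (\<lambda>z. \<phi> (p z))"
    unfolding restrict_distr_def using measurable_restrict_distr[OF M p] \<phi> by (rule integral_distr)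
  also have "\<dots> = integral\<^sup>L M (\<lambda>z. indicator H z *\<^sub>R \<phi> (p z))"
    using M H finite_borel_space[OF M] by (intro integral_restrict_space) (auto simp: finite_borel_def)
  finally show ?thesis by simp
qed

lemma measure_restrict_distr:
  assumes M: "finite_borel M" and H: "H \<in> sets borel" and p: "p \<in> borel_measurable borel"
    and A: "A \<in> sets borel"
  shows "measure (restrict_distr M H p) A = measure M (H \<inter> p -` A)"
proof -
  have "measure (restrict_distr M H p) A = measure (restrict_space M H) (p -` A \<inter> space (restrict_space M H))"
    unfolding restrict_distr_def using measurable_restrict_distr[OF M p] A by (intro measure_distr) auto
  also have "\<dots> = measure M (H \<inter> p -` A)"
    using M H finite_borel_space[OF M]
    by (subst measure_restrict_space) (auto simp: Int_commute space_restrict_space finite_borel_def)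
  finally show ?thesis .
qed

lemma measure_restrict_distr_le:
  assumes M: "finite_borel M" and H: "H \<in> sets borel" and p: "p \<in> borel_measurable borel"
    and A: "A \<in> sets borel" and B: "p -` A \<subseteq> B" "B \<in> sets borel"
  shows "measure (restrict_distr M H p) A \<le> measure M B"
  using finite_borel_measure_mono[OF M _ B(2), of "H \<inter> p -` A"] B(1)
  by (simp add: measure_restrict_distr[OF M H p A] le_infI2)

lemma measure_restrict_distr_compl_null:
  assumes M: "finite_borel M" and H: "H \<in> sets borel" and p: "p \<in> borel_measurable borel"
    and F: "F \<in> sets borel" and S: "S \<in> sets borel" "p -` (- F) \<subseteq> - S" "measure M (- S) = 0"
  shows "measure (restrict_distr M H p) (- F) = 0"
  using measure_restrict_distr_le[OF M H p _ S(2)] F S(1,3) by (simp add: antisym)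

lemma narrow_conv_restrict_distr:
  fixes t :: "'a::euclidean_space \<Rightarrow> real" and ps :: "nat \<Rightarrow> 'a \<Rightarrow> 'a"
  assumes nc: "narrow_conv \<nu>s \<nu>" and fs: "\<And>j. finite_borel (\<nu>s j)" and f: "finite_borel \<nu>"
    and t: "continuous_on UNIV t" and t0: "measure \<nu> {z. t z = 0} = 0"
    and ps: "\<And>j. continuous_on UNIV (ps j)" and p: "continuous_on UNIV p"
    and unif: "\<And>R. uniform_limit (cball x R) ps p sequentially"
  shows "narrow_conv (\<lambda>j. restrict_distr (\<nu>s j) {z. t z \<ge> 0} (ps j)) (restrict_distr \<nu> {z. t z \<ge> 0} p)"
  unfolding narrow_conv_def
proof (intro allI impI)
  fix \<phi> :: "'a \<Rightarrow> real" assume "continuous_on UNIV \<phi> \<and> bounded (range \<phi>)"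
  then have \<phi>c: "continuous_on UNIV \<phi>" and "bounded (range \<phi>)" by auto
  then obtain M where M: "\<And>z. \<bar>\<phi> z\<bar> \<le> M" unfolding bounded_iff by (metis rangeI real_norm_def)
  define H where "H = {z. t z \<ge> 0}"
  have Hb: "H \<in> sets borel" unfolding H_def using t by (intro borel_closed closed_Collect_le) auto
  have \<phi>m: "\<phi> \<in> borel_measurable borel" using \<phi>c by (rule borel_measurable_continuous_onI)
  have psm: "ps j \<in> borel_measurable borel" for j using ps by (rule borel_measurable_continuous_onI)
  have pm: "p \<in> borel_measurable borel" using p by (rule borel_measurable_continuous_onI)
  define gs where "gs j z = indicator H z * \<phi> (ps j z)" for j z
  define g where "g z = indicator H z * \<phi> (p z)" for z
  have gsm: "gs j \<in> borel_measurable borel" for j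
    unfolding gs_def using Hb by (intro borel_measurable_times borel_measurable_indicator measurable_compose[OF psm \<phi>m])
  have gm: "g \<in> borel_measurable borel"
    unfolding g_def using Hb by (intro borel_measurable_times borel_measurable_indicator measurable_compose[OF pm \<phi>m])
  have gsb: "\<bar>gs j z\<bar> \<le> M" and gb: "\<bar>g z\<bar> \<le> M" for j z
    unfolding gs_def g_def using M[of "ps j z"] M[of "p z"] M[of 0] by (auto simp: indicator_def)
  have "uniform_limit (cball x R) gs g sequentially" for R
  proof (rule metric_uniform_limit_imp_uniform_limit)
    show "uniform_limit (cball x R) (\<lambda>j z. \<phi> (ps j z)) (\<lambda>z. \<phi> (p z)) sequentially"
      using continuous_on_subset[OF p] by (intro uniform_limit_compose_continuous[OF unif compact_cball _ \<phi>c]) simp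
    show "\<forall>\<^sub>F j in sequentially. \<forall>z\<in>cball x R. dist (gs j z) (g z) \<le> dist (\<phi> (ps j z)) (\<phi> (p z))"
      by (intro always_eventually allI ballI) (simp add: gs_def g_def indicator_def)
  qed
  then have "(\<lambda>j. integral\<^sup>L (\<nu>s j) (gs j) - integral\<^sup>L (\<nu>s j) g) \<longlonglongrightarrow> 0"
    by (rule narrow_conv_integral_uniform_diff[OF nc fs f gsm gsb gm gb])
  moreover have "continuous_on UNIV (\<lambda>z. \<phi> (p z))" using continuous_on_compose2[OF \<phi>c p] by simp
  then have "(\<lambda>j. integral\<^sup>L (\<nu>s j) g) \<longlonglongrightarrow> integral\<^sup>L \<nu> g"
    unfolding g_def H_def using M by (rule narrow_conv_integral_indicator_mult[OF nc fs f _ _ t t0])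
  ultimately have "(\<lambda>j. (integral\<^sup>L (\<nu>s j) (gs j) - integral\<^sup>L (\<nu>s j) g) + integral\<^sup>L (\<nu>s j) g)
      \<longlonglongrightarrow> 0 + integral\<^sup>L \<nu> g"
    by (rule tendsto_add)
  then show "(\<lambda>j. integral\<^sup>L (restrict_distr (\<nu>s j) {z. t z \<ge> 0} (ps j)) \<phi>)
      \<longlonglongrightarrow> integral\<^sup>L (restrict_distr \<nu> {z. t z \<ge> 0} p) \<phi>"
    unfolding gs_def g_def H_def
    using integral_restrict_distr[OF fs Hb[unfolded H_def] psm \<phi>m]
      integral_restrict_distr[OF f Hb[unfolded H_def] pm \<phi>m] by simp
qed

text \<open>Non-Borel cells need no special care: both sides are then \<open>0\<close>, since a non-Borel \<open>A\<close>
  has a non-Borel ray set \<open>A + \<real>\<^sub>+ \<sigma> w\<close>.\<close>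
lemma measure_restrict_distr_proj_along:
  fixes a x w :: "'a::euclidean_space"
  assumes M: "finite_borel M" and aw: "a \<bullet> w = 1" and \<sigma>: "\<sigma> = 1 \<or> \<sigma> = -1"
    and A: "\<And>y. y \<in> A \<Longrightarrow> a \<bullet> (y - x) = 0"
  shows "measure (restrict_distr M {z. \<sigma> * (a \<bullet> (z - x)) \<ge> 0} (proj_along a x w)) A
    = measure M (ray_sum A (\<sigma> *\<^sub>R w))"
proof (cases "A \<in> sets borel")
  case True
  have "{z. \<sigma> * (a \<bullet> (z - x)) \<ge> 0} \<in> sets borel"
    by (intro borel_closed closed_Collect_le continuous_intros)
  moreover have "proj_along a x w \<in> borel_measurable borel"
    using continuous_on_proj_along by (rule borel_measurable_continuous_onI)
  ultimately show ?thesis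
    using measure_restrict_distr[OF M _ _ True] ray_sum_eq_proj_along[OF aw A \<sigma>]
    by (simp add: vimage_def Collect_conj_eq)
next
  case False
  have "{z. a \<bullet> (z - x) = 0} \<in> sets borel"
    by (intro borel_closed closed_Collect_eq continuous_intros)
  then have "ray_sum A (\<sigma> *\<^sub>R w) \<notin> sets borel"
    using False ray_sum_Int_hyperplane[OF aw A \<sigma>] by (metis sets.Int)
  then show ?thesis
    using False M by (simp add: measure_notin_sets restrict_distr_def finite_borel_def)
qed

section \<open>Passing centers to narrow limits\<close>

text \<open>The part of the \<open>\<M>(E)\<close> condition that survives projection onto hyperplane sections:
  only hyperplanes through \<open>x\<close> not containing \<open>S\<close> are required to be null.\<close>
definition null_on_hyperplanes :: "'a::euclidean_space measure \<Rightarrow> 'a set \<Rightarrow> 'a \<Rightarrow> bool" where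
  "null_on_hyperplanes \<nu> S x \<longleftrightarrow>
     (\<forall>g. affine_form g \<longrightarrow> (\<exists>y\<in>S. g y \<noteq> g x) \<longrightarrow> measure \<nu> {z. g z = g x} = 0)"

lemma null_on_hyperplanes_meas_M:
  fixes \<mu> :: "'a::euclidean_space measure"
  assumes "meas_M \<mu>"
  shows "null_on_hyperplanes \<mu> S x"
  unfolding null_on_hyperplanes_def
proof (intro allI impI)
  fix l :: "'a \<Rightarrow> real" assume "affine_form l" "\<exists>y\<in>S. l y \<noteq> l x"
  then obtain a c y where l: "\<And>z. l z = a \<bullet> z + c" and "l y \<noteq> l x"
    using affine_form_inner by metis
  then have "a \<noteq> 0" by (auto simp: l)
  moreover have "{z. l z = l x} = {z. a \<bullet> z = a \<bullet> x}" by (auto simp: l)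
  ultimately show "measure \<mu> {z. l z = l x} = 0"
    using assms unfolding meas_M_def measure_def by simp
qed

text \<open>The theorem relativised to measures carried by an affine subspace \<open>S\<close> and to cells of
  a common, not necessarily normalised, mass: the form needed for induction on the number of
  coordinates, where \<open>S\<close> becomes a hyperplane section.\<close>
definition centers_closed :: "('a::euclidean_space \<Rightarrow> real) list \<Rightarrow> bool" where
  "centers_closed Ls \<longleftrightarrow> (\<forall>S x \<nu>s \<nu> cs c. affine S \<longrightarrow> x \<in> S \<longrightarrow>
     (\<forall>j. finite_borel (\<nu>s j)) \<longrightarrow> finite_borel \<nu> \<longrightarrow> narrow_conv \<nu>s \<nu> \<longrightarrow>
     (\<forall>j. measure (\<nu>s j) (- S) = 0) \<longrightarrow> measure \<nu> (- S) = 0 \<longrightarrow> null_on_hyperplanes \<nu> S x \<longrightarrow>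
     cs \<longlonglongrightarrow> c \<longrightarrow> c > 0 \<longrightarrow>
     (\<forall>j. \<exists>P. yy_adapted S Ls x P \<and> (\<forall>A\<in>P. measure (\<nu>s j) A = cs j)) \<longrightarrow>
     (\<exists>P. yy_adapted S Ls x P \<and> (\<forall>A\<in>P. measure \<nu> A = c)))"

lemma centers_closedI:
  assumes "\<And>S x \<nu>s \<nu> cs c. affine S \<Longrightarrow> x \<in> S \<Longrightarrow>
     (\<And>j. finite_borel (\<nu>s j)) \<Longrightarrow> finite_borel \<nu> \<Longrightarrow> narrow_conv \<nu>s \<nu> \<Longrightarrow>
     (\<And>j. measure (\<nu>s j) (- S) = 0) \<Longrightarrow> measure \<nu> (- S) = 0 \<Longrightarrow> null_on_hyperplanes \<nu> S x \<Longrightarrow>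
     cs \<longlonglongrightarrow> c \<Longrightarrow> c > 0 \<Longrightarrow>
     (\<And>j. \<exists>P. yy_adapted S Ls x P \<and> (\<forall>A\<in>P. measure (\<nu>s j) A = cs j)) \<Longrightarrow>
     \<exists>P. yy_adapted S Ls x P \<and> (\<forall>A\<in>P. measure \<nu> A = c)"
  shows "centers_closed Ls"
  using assms unfolding centers_closed_def by blast

lemma centers_closedD:
  assumes "centers_closed Ls" "affine S" "x \<in> S"
    "\<And>j. finite_borel (\<nu>s j)" "finite_borel \<nu>" "narrow_conv \<nu>s \<nu>"
    "\<And>j. measure (\<nu>s j) (- S) = 0" "measure \<nu> (- S) = 0" "null_on_hyperplanes \<nu> S x"
    "cs \<longlonglongrightarrow> c" "c > 0" "\<And>j. \<exists>P. yy_adapted S Ls x P \<and> (\<forall>A\<in>P. measure (\<nu>s j) A = cs j)"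
  shows "\<exists>P. yy_adapted S Ls x P \<and> (\<forall>A\<in>P. measure \<nu> A = c)"
  using assms unfolding centers_closed_def by blast

lemma centers_closed_Nil: "centers_closed []"
proof (rule centers_closedI)
  fix S x \<nu>s \<nu> cs and c :: real
  assume fs: "\<And>j. finite_borel (\<nu>s j)" and f: "finite_borel \<nu>" and nc: "narrow_conv \<nu>s \<nu>"
    and conc: "\<And>j. measure (\<nu>s j) (- S) = 0" and conc': "measure \<nu> (- S) = 0"
    and cs: "cs \<longlonglongrightarrow> c" and ex: "\<And>j. \<exists>P. yy_adapted S [] x P \<and> (\<forall>A\<in>P. measure (\<nu>s j) A = cs j)"
  have S: "S = {x}" using ex[of 0] yy_adapted_NilD by blast
  have point: "measure M {x} = measure M UNIV" if M: "finite_borel M" "measure M (- {x}) = 0" for M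
  proof -
    interpret finite_measure M using M unfolding finite_borel_def by simp
    have "measure M (UNIV - {x}) = measure M UNIV - measure M {x}"
      using M finite_borel_space[OF M(1)] unfolding finite_borel_def by (intro finite_measure_Diff) auto
    then show ?thesis using M(2) by (simp add: Compl_eq_Diff_UNIV)
  qed
  have "cs j = measure (\<nu>s j) UNIV" for j
  proof -
    obtain P where "yy_adapted S [] x P" "\<forall>A\<in>P. measure (\<nu>s j) A = cs j" using ex by blast
    then have "measure (\<nu>s j) {x} = cs j" using yy_adapted_NilD by blast
    then show ?thesis using point[OF fs conc[unfolded S]] by simp
  qed
  then have "cs = (\<lambda>j. measure (\<nu>s j) UNIV)" by auto
  then have "cs \<longlonglongrightarrow> measure \<nu> {x}"
    using narrow_conv_total_mass[OF nc fs f] point[OF f conc'[unfolded S]] by simp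
  then have "c = measure \<nu> {x}" using cs LIMSEQ_unique by blast
  then show "\<exists>P. yy_adapted S [] x P \<and> (\<forall>A\<in>P. measure \<nu> A = c)"
    using S yy_adapted.base[of x] by blast
qed

lemma ray_sum_subset_slab_or_far:
  fixes a w x :: "'a::real_inner"
  assumes aw: "a \<bullet> w = 1" and A: "\<And>y. y \<in> A \<Longrightarrow> a \<bullet> (y - x) = 0 \<and> w \<bullet> (y - x) \<ge> 0"
    and R: "R < \<delta> * norm w"
  shows "ray_sum A w \<subseteq> {z. \<bar>a \<bullet> (z - x)\<bar> \<le> \<delta>} \<union> {z. R \<le> dist z x}"
proof
  fix z assume "z \<in> ray_sum A w"
  then obtain y s where z: "z = y + s *\<^sub>R w" "y \<in> A" "s \<ge> 0" unfolding ray_sum_def by auto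
  have "a \<bullet> (z - x) = s" using z A[OF z(2)] aw by (simp add: inner_diff_right inner_add_right)
  moreover have "R \<le> dist z x" if "\<delta> < s"
  proof -
    have w: "norm w > 0" using aw by (auto simp: zero_less_norm_iff)
    have "s * norm w * norm w \<le> w \<bullet> (z - x)"
      using z A[OF z(2)] by (simp add: inner_diff_right inner_add_right dot_square_norm power2_eq_square)
    also have "\<dots> \<le> norm w * dist z x" by (simp add: dist_norm norm_cauchy_schwarz)
    finally have "s * norm w \<le> dist z x" using w by (simp add: mult.commute)
    moreover have "R < s * norm w" using R that w by (smt (verit) mult_right_mono)
    ultimately show ?thesis by simp
  qed
  ultimately show "z \<in> {z. \<bar>a \<bullet> (z - x)\<bar> \<le> \<delta>} \<union> {z. R \<le> dist z x}"
    using z(3) by force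
qed

text \<open>If the normalised directions escaped to infinity, a cell lying on the far side of the
  hyperplane \<open>{a \<bullet> (z - x) = 0}\<close> would be carried by a thin slab around it together with the
  complement of a large ball, both of mass below \<open>c / 4\<close>.\<close>
lemma bounded_yy_directions:
  fixes a x :: "'a::euclidean_space"
  assumes nc: "narrow_conv \<nu>s \<nu>" and fs: "\<And>j. finite_borel (\<nu>s j)" and f: "finite_borel \<nu>"
    and t0: "measure \<nu> {z. a \<bullet> (z - x) = 0} = 0" and cs: "cs \<longlonglongrightarrow> c" and c: "c > 0"
    and aw: "\<And>j. a \<bullet> w j = 1" and Q: "\<And>j. yy_adapted F Ls x (Q j)"
    and QF: "\<And>j A y. A \<in> Q j \<Longrightarrow> y \<in> A \<Longrightarrow> a \<bullet> (y - x) = 0"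
    and Qm: "\<And>j A. A \<in> Q j \<Longrightarrow> measure (\<nu>s j) (ray_sum A (w j)) = cs j"
  shows "bounded (range w)"
proof -
  have c4: "c / 4 > 0" using c by simp
  have "continuous_on UNIV (\<lambda>z. a \<bullet> (z - x))" by (intro continuous_intros)
  then obtain \<delta> where \<delta>: "\<delta> > 0"
    and slab: "\<forall>\<^sub>F j in sequentially. measure (\<nu>s j) {z. \<bar>a \<bullet> (z - x)\<bar> \<le> \<delta>} < c / 4"
    using narrow_conv_thin_level[OF nc fs f c4 _ t0] by blast
  obtain R where far: "\<forall>\<^sub>F j in sequentially. measure (\<nu>s j) {z. R \<le> dist z x} < c / 4"
    using narrow_conv_tight[OF nc fs f c4] by blast
  have big: "\<forall>\<^sub>F j in sequentially. cs j > c / 2"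
    using cs by (rule order_tendstoD(1)) (use c in simp)
  have "\<forall>\<^sub>F j in sequentially. norm (w j) \<le> norm (R / \<delta>)"
    using slab far big
  proof eventually_elim
    case (elim j)
    show ?case
    proof (rule ccontr)
      assume "\<not> norm (w j) \<le> norm (R / \<delta>)"
      then have "R < \<delta> * norm (w j)" using \<delta> by (simp add: field_simps)
      obtain A where A: "A \<in> Q j" "\<forall>y\<in>A. w j \<bullet> (y - x) \<ge> 0"
        using yy_adapted_cell_in_halfspace[OF Q] by blast
      define B1 where "B1 = {z. \<bar>a \<bullet> (z - x)\<bar> \<le> \<delta>}"
      define B2 where "B2 = {z. R \<le> dist z x}"
      have B: "B1 \<in> sets borel" "B2 \<in> sets borel" unfolding B1_def B2_def
        by (intro borel_closed closed_Collect_le continuous_intros)+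
      have "cs j \<le> measure (\<nu>s j) (B1 \<union> B2)"
        unfolding Qm[OF A(1), symmetric] B1_def B2_def
        using ray_sum_subset_slab_or_far[OF aw _ \<open>R < \<delta> * norm (w j)\<close>, of A x] QF A B
        by (intro finite_borel_measure_mono[OF fs]) (auto simp: B1_def B2_def)
      also have "\<dots> \<le> measure (\<nu>s j) B1 + measure (\<nu>s j) B2"
        using B fs[of j] by (intro measure_Un_le) (auto simp: finite_borel_def)
      finally show False using elim unfolding B1_def B2_def by linarith
    qed
  qed
  then have "Bseq w" by (rule Bseq_eventually_mono) simp
  then show ?thesis by (simp add: Bseq_eq_bounded)
qed

lemma null_on_hyperplanes_restrict_distr_proj_along:
  fixes a x w :: "'a::euclidean_space"
  assumes f: "finite_borel \<nu>" and H: "H \<in> sets borel" and hn: "null_on_hyperplanes \<nu> S x"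
    and F: "F \<subseteq> S" "\<And>z. z \<in> F \<Longrightarrow> a \<bullet> (z - x) = 0" "x \<in> F"
  shows "null_on_hyperplanes (restrict_distr \<nu> H (proj_along a x w)) F x"
  unfolding null_on_hyperplanes_def
proof (intro allI impI)
  fix g :: "'a \<Rightarrow> real" assume g: "affine_form g" and "\<exists>y\<in>F. g y \<noteq> g x"
  then obtain y where y: "y \<in> F" "g y \<noteq> g x" by blast
  let ?G = "\<lambda>z. g (proj_along a x w z)"
  have "continuous_on UNIV ?G"
    using continuous_on_affine_form[OF g] continuous_on_proj_along by (rule continuous_on_compose2) auto
  then have Gb: "{z. ?G z = g x} \<in> sets borel"
    by (intro borel_closed closed_Collect_eq continuous_on_const)
  have "{z. g z = g x} \<in> sets borel"
    using continuous_on_affine_form[OF g] by (intro borel_closed closed_Collect_eq continuous_on_const)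
  then have "measure (restrict_distr \<nu> H (proj_along a x w)) {z. g z = g x} \<le> measure \<nu> {z. ?G z = g x}"
    using continuous_on_proj_along
    by (intro measure_restrict_distr_le[OF f H _ _ _ Gb] borel_measurable_continuous_onI) auto
  also have "\<dots> = 0"
  proof -
    have "y \<in> S" "?G y \<noteq> ?G x" using y F by (auto simp: proj_along_fixed)
    then have "measure \<nu> {z. ?G z = ?G x} = 0"
      using hn affine_form_proj_along[OF g] unfolding null_on_hyperplanes_def by blast
    then show ?thesis using F(2,3) by (simp add: proj_along_fixed)
  qed
  finally show "measure (restrict_distr \<nu> H (proj_along a x w)) {z. g z = g x} = 0"
    by (simp add: measure_nonneg antisym)
qed

lemma bounded_directions_convergent_subseq:
  fixes w :: "nat \<Rightarrow> 'a::euclidean_space"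
  assumes "bounded (range w)" "\<And>j. a \<bullet> w j = 1" "\<And>j. x + w j \<in> S" "closed S"
  obtains s w0 where "strict_mono s" "(w \<circ> s) \<longlonglongrightarrow> w0" "a \<bullet> w0 = 1" "x + w0 \<in> S"
proof -
  obtain s w0 where s: "strict_mono s" and ws: "(w \<circ> s) \<longlonglongrightarrow> w0"
    using bounded_imp_convergent_subsequence[OF assms(1)] by blast
  have "(\<lambda>j. a \<bullet> (w \<circ> s) j) \<longlonglongrightarrow> a \<bullet> w0" using ws by (intro tendsto_intros)
  then have "a \<bullet> w0 = 1" using assms(2) by (simp add: LIMSEQ_const_iff)
  moreover have "(\<lambda>j. x + (w \<circ> s) j) \<longlonglongrightarrow> x + w0" using ws by (intro tendsto_intros)
  then have "x + w0 \<in> S" by (rule closed_sequentially[OF assms(4), rotated]) (simp add: assms(3))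
  ultimately show thesis using that s ws by blast
qed

text \<open>One half of the inductive step: projecting along the limit direction \<open>w0\<close> the part of
  \<open>\<nu>\<close> on one side of the hyperplane section \<open>F\<close> gives measures on \<open>F\<close> to which the induction
  hypothesis applies.\<close>
lemma centers_closed_half:
  fixes a x :: "'a::euclidean_space"
  assumes IH: "centers_closed Ls" and Ls: "\<forall>l\<in>set Ls. affine_form l"
    and S: "affine S" "x \<in> S" and l: "\<And>z. l z = a \<bullet> z + k" and F: "F = {z\<in>S. l z = l x}"
    and fs: "\<And>j. finite_borel (\<nu>s j)" and f: "finite_borel \<nu>" and nc: "narrow_conv \<nu>s \<nu>"
    and conc: "\<And>j. measure (\<nu>s j) (- S) = 0" "measure \<nu> (- S) = 0"
    and hn: "null_on_hyperplanes \<nu> S x" and cs: "cs \<longlonglongrightarrow> c" and c: "c > 0"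
    and ws: "ws \<longlonglongrightarrow> w0" "\<And>j. a \<bullet> ws j = 1" "\<And>j. x + ws j \<in> S"
    and w0: "a \<bullet> w0 = 1" "x + w0 \<in> S" and \<sigma>: "\<sigma> = 1 \<or> \<sigma> = -1"
    and Q: "\<And>j. yy_adapted F Ls x (Q j)"
    and Qm: "\<And>j A. A \<in> Q j \<Longrightarrow> measure (\<nu>s j) (ray_sum A (\<sigma> *\<^sub>R ws j)) = cs j"
  shows "\<exists>P. yy_adapted F Ls x P \<and> (\<forall>A\<in>P. measure \<nu> (ray_sum A (\<sigma> *\<^sub>R w0)) = c)"
proof -
  have F_hyp: "F = {z\<in>S. a \<bullet> (z - x) = 0}" unfolding F l by (auto simp: inner_diff_right)
  have "l = (\<lambda>z. a \<bullet> z + k)" using l by auto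
  then have affl: "affine_form l" by (simp add: affine_form_inner_plus)
  have aF: "affine F" unfolding F using S(1) affl by (rule affine_level_set)
  have xF: "x \<in> F" using S(2) F by simp
  have Fb: "F \<in> sets borel" using affine_closed[OF aF] by simp
  have Sb: "S \<in> sets borel" using affine_closed[OF S(1)] by simp
  have cells: "\<And>y. y \<in> A \<Longrightarrow> a \<bullet> (y - x) = 0" if "yy_adapted F Ls x P" "A \<in> P" for P A
    using yy_adapted_subset[OF that(1) aF Ls] that(2) F_hyp by auto
  define H where "H = {z. \<sigma> * (a \<bullet> (z - x)) \<ge> 0}"
  have Hb: "H \<in> sets borel" unfolding H_def by (intro borel_closed closed_Collect_le continuous_intros)
  have pm: "proj_along a x w \<in> borel_measurable borel" for w
    using continuous_on_proj_along by (rule borel_measurable_continuous_onI)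
  define \<mu>s where "\<mu>s j = restrict_distr (\<nu>s j) H (proj_along a x (ws j))" for j
  define \<mu> where "\<mu> = restrict_distr \<nu> H (proj_along a x w0)"
  have \<mu>f: "finite_borel (\<mu>s j)" "finite_borel \<mu>" for j
    unfolding \<mu>s_def \<mu>_def using fs f Hb pm by (auto intro: finite_borel_restrict_distr)
  have "l (x + w0) \<noteq> l x" using w0(1) by (simp add: l inner_add_right)
  then have "measure \<nu> {z. l z = l x} = 0"
    using hn affl w0(2) unfolding null_on_hyperplanes_def by blast
  then have t0: "measure \<nu> {z. \<sigma> * (a \<bullet> (z - x)) = 0} = 0"
    using \<sigma> by (auto simp: l inner_diff_right)
  have "continuous_on UNIV (\<lambda>z. \<sigma> * (a \<bullet> (z - x)))" by (intro continuous_intros)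
  then have "narrow_conv \<mu>s \<mu>"
    unfolding \<mu>s_def \<mu>_def H_def
    using narrow_conv_restrict_distr[OF nc fs f _ t0 continuous_on_proj_along continuous_on_proj_along
        uniform_limit_proj_along[OF ws(1)]] by blast
  moreover have "measure (\<mu>s j) (- F) = 0" "measure \<mu> (- F) = 0" for j
  proof -
    have "proj_along a x w -` (- F) \<subseteq> - S" if "x + w \<in> S" "a \<bullet> w = 1" for w
      using proj_along_in_affine[OF S(1,2) that(1)] proj_along_hyperplane[OF that(2)] F_hyp by auto
    then show "measure (\<mu>s j) (- F) = 0" "measure \<mu> (- F) = 0"
      unfolding \<mu>s_def \<mu>_def using ws(2,3) w0 conc
      by (blast intro: measure_restrict_distr_compl_null[OF fs Hb pm Fb Sb]
          measure_restrict_distr_compl_null[OF f Hb pm Fb Sb])+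
  qed
  moreover have "null_on_hyperplanes \<mu> F x"
    unfolding \<mu>_def using F_hyp xF
    by (intro null_on_hyperplanes_restrict_distr_proj_along[OF f Hb hn]) auto
  moreover have "\<exists>P. yy_adapted F Ls x P \<and> (\<forall>A\<in>P. measure (\<mu>s j) A = cs j)" for j
    using Q[of j] Qm measure_restrict_distr_proj_along[OF fs ws(2) \<sigma> cells[OF Q]]
    unfolding \<mu>s_def H_def by auto
  ultimately have "\<exists>P. yy_adapted F Ls x P \<and> (\<forall>A\<in>P. measure \<mu> A = c)"
    by (intro centers_closedD[OF IH aF xF \<mu>f _ _ _ _ cs c])
  then obtain P where P: "yy_adapted F Ls x P" "\<And>A. A \<in> P \<Longrightarrow> measure \<mu> A = c" by blast
  then show ?thesis
    using measure_restrict_distr_proj_along[OF f w0(1) \<sigma> cells[OF P(1)]] unfolding \<mu>_def H_def by auto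
qed

lemma centers_closed_Cons:
  fixes l :: "'a::euclidean_space \<Rightarrow> real"
  assumes l: "affine_form l" and Ls: "\<forall>l\<in>set Ls. affine_form l" and IH: "centers_closed Ls"
  shows "centers_closed (l # Ls)"
proof (rule centers_closedI)
  fix S x \<nu>s \<nu> cs and c :: real
  assume S: "affine S" "x \<in> S" and fs: "\<And>j. finite_borel (\<nu>s j)" and f: "finite_borel \<nu>"
    and nc: "narrow_conv \<nu>s \<nu>" and conc: "\<And>j. measure (\<nu>s j) (- S) = 0" "measure \<nu> (- S) = 0"
    and hn: "null_on_hyperplanes \<nu> S x" and cs: "cs \<longlonglongrightarrow> c" and c: "c > 0"
    and ex: "\<And>j. \<exists>P. yy_adapted S (l # Ls) x P \<and> (\<forall>A\<in>P. measure (\<nu>s j) A = cs j)"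
  obtain a k where lk: "\<And>z. l z = a \<bullet> z + k" using affine_form_inner[OF l] by blast
  define F where "F = {z\<in>S. l z = l x}"
  have "\<exists>w Q1 Qm1. x + w \<in> S \<and> a \<bullet> w = 1 \<and> yy_adapted F Ls x Q1 \<and> yy_adapted F Ls x Qm1 \<and>
          (\<forall>A\<in>Q1. measure (\<nu>s j) (ray_sum A w) = cs j) \<and>
          (\<forall>A\<in>Qm1. measure (\<nu>s j) (ray_sum A (- w)) = cs j)" for j
  proof -
    obtain P where P: "yy_adapted S (l # Ls) x P" "\<forall>A\<in>P. measure (\<nu>s j) A = cs j" using ex by blast
    obtain w Q1 Qm1 where "x + w \<in> S" "a \<bullet> w = 1" "yy_adapted F Ls x Q1" "yy_adapted F Ls x Qm1"
      and P_eq: "P = (\<lambda>A. ray_sum A (- w)) ` Qm1 \<union> (\<lambda>A. ray_sum A w) ` Q1"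
      using yy_adapted_ConsE[OF P(1) S(1) lk, folded F_def] by blast
    moreover have "\<forall>A\<in>Q1. measure (\<nu>s j) (ray_sum A w) = cs j"
      and "\<forall>A\<in>Qm1. measure (\<nu>s j) (ray_sum A (- w)) = cs j"
      using P(2) unfolding P_eq by auto
    ultimately show ?thesis by blast
  qed
  then obtain w Q1 Qm1 where wS: "\<And>j. x + w j \<in> S" and aw: "\<And>j. a \<bullet> w j = 1"
    and Q1: "\<And>j. yy_adapted F Ls x (Q1 j)" and Qm1: "\<And>j. yy_adapted F Ls x (Qm1 j)"
    and Q1m: "\<And>j A. A \<in> Q1 j \<Longrightarrow> measure (\<nu>s j) (ray_sum A (w j)) = cs j"
    and Qm1m: "\<And>j A. A \<in> Qm1 j \<Longrightarrow> measure (\<nu>s j) (ray_sum A (- w j)) = cs j"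
    by metis
  have aF: "affine F" unfolding F_def using S(1) l by (rule affine_level_set)
  have QF: "a \<bullet> (y - x) = 0" if "A \<in> Q1 j" "y \<in> A" for A j y
    using yy_adapted_subset[OF Q1[of j] aF Ls] that unfolding F_def by (auto simp: lk inner_diff_right)
  have "l (x + w 0) \<noteq> l x" using aw[of 0] by (simp add: lk inner_add_right)
  then have "measure \<nu> {z. l z = l x} = 0"
    using hn wS[of 0] l unfolding null_on_hyperplanes_def by blast
  moreover have "{z. l z = l x} = {z. a \<bullet> (z - x) = 0}" by (auto simp: lk inner_diff_right)
  ultimately have "bounded (range w)"
    using bounded_yy_directions[OF nc fs f _ cs c aw Q1 QF Q1m] by simp
  then obtain s w0 where s: "strict_mono s" and ws: "(w \<circ> s) \<longlonglongrightarrow> w0" and aw0: "a \<bullet> w0 = 1"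
    and w0S: "x + w0 \<in> S"
    using bounded_directions_convergent_subseq[where w=w, OF _ aw wS affine_closed[OF S(1)]] by blast
  have half: "\<exists>P. yy_adapted F Ls x P \<and> (\<forall>A\<in>P. measure \<nu> (ray_sum A (\<sigma> *\<^sub>R w0)) = c)"
    if \<sigma>: "\<sigma> = 1 \<or> \<sigma> = -1" and Q: "\<And>j. yy_adapted F Ls x (Q j)"
      and Qm: "\<And>j A. A \<in> Q j \<Longrightarrow> measure (\<nu>s (s j)) (ray_sum A (\<sigma> *\<^sub>R (w \<circ> s) j)) = (cs \<circ> s) j"
    for \<sigma> Q
    by (rule centers_closed_half[OF IH Ls S lk F_def _ f narrow_conv_subseq[OF nc s] _ conc(2) hn
          LIMSEQ_subseq_LIMSEQ[OF cs s] c ws _ _ aw0 w0S \<sigma> Q Qm]) (use fs conc(1) aw wS in auto)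
  obtain P1 where P1: "yy_adapted F Ls x P1" "\<forall>A\<in>P1. measure \<nu> (ray_sum A w0) = c"
    using half[of 1 "Q1 \<circ> s"] Q1 Q1m by auto
  obtain Pm1 where Pm1: "yy_adapted F Ls x Pm1" "\<forall>A\<in>Pm1. measure \<nu> (ray_sum A (- w0)) = c"
    using half[of "-1" "Qm1 \<circ> s"] Qm1 Qm1m by auto
  have "l (x + w0) \<noteq> l x" using aw0 by (simp add: lk inner_add_right)
  then have "yy_adapted S (l # Ls) x ((\<lambda>A. ray_sum A (- w0)) ` Pm1 \<union> (\<lambda>A. ray_sum A w0) ` P1)"
    using yy_adapted.step[OF S(2) w0S _ F_def P1(1) Pm1(1) refl] by blast
  then show "\<exists>P. yy_adapted S (l # Ls) x P \<and> (\<forall>A\<in>P. measure \<nu> A = c)"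
    using P1(2) Pm1(2) by blast
qed

lemma centers_closed: "\<forall>l\<in>set Ls. affine_form l \<Longrightarrow> centers_closed Ls"
  by (induction Ls) (auto intro: centers_closed_Nil centers_closed_Cons)

lemma yy_equipartition_null:
  assumes "finite_borel \<mu>" "measure \<mu> UNIV = 0"
  shows "yy_equipartition \<mu> P"
  unfolding yy_equipartition_def
proof
  fix A
  have "measure \<mu> A \<le> measure \<mu> UNIV" if "A \<in> sets \<mu>"
    using finite_borel_measure_mono[OF assms(1)] by simp
  then show "measure \<mu> A = measure \<mu> UNIV / 2 ^ DIM('a)"
    using assms(2) by (cases "A \<in> sets \<mu>") (auto simp: measure_notin_sets intro: antisym)
qed

theorem lemma12:
  fixes Ls :: "('a::euclidean_space \<Rightarrow> real) list"
    and \<mu>s :: "nat \<Rightarrow> 'a measure" and \<mu> :: "'a measure" and x :: 'a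
  assumes "coord_system Ls"
    and "\<And>p. meas_M (\<mu>s p)"
    and "meas_M \<mu>"
    and "narrow_conv \<mu>s \<mu>"
    and "\<And>p. is_center (\<mu>s p) Ls x"
  shows "is_center \<mu> Ls x"
proof -
  have Ls: "\<forall>l\<in>set Ls. affine_form l" using assms(1) unfolding coord_system_def by blast
  have fs: "\<And>p. finite_borel (\<mu>s p)" and f: "finite_borel \<mu>"
    using assms(2,3) meas_M_finite_borel by auto
  show ?thesis
  proof (cases "measure \<mu> UNIV = 0")
    case True
    obtain P where "yy_adapted UNIV Ls x P" using assms(5)[of 0] unfolding is_center_def by blast
    then show ?thesis using yy_equipartition_null[OF f True] unfolding is_center_def by blast
  next
    case False
    let ?c = "\<lambda>M. measure M UNIV / 2 ^ DIM('a)"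
    have "measure \<mu> UNIV > 0" using False measure_nonneg[of \<mu> UNIV] by linarith
    then have "?c \<mu> > 0" by simp
    moreover have "(\<lambda>p. ?c (\<mu>s p)) \<longlonglongrightarrow> ?c \<mu>"
      using narrow_conv_total_mass[OF assms(4) fs f] by (intro tendsto_divide) auto
    ultimately have "\<exists>P. yy_adapted UNIV Ls x P \<and> (\<forall>A\<in>P. measure \<mu> A = ?c \<mu>)"
      using centers_closedD[OF centers_closed[OF Ls] affine_UNIV UNIV_I fs f assms(4) _ _
          null_on_hyperplanes_meas_M[OF assms(3)]] assms(5)
      unfolding is_center_def yy_equipartition_def by auto
    then show ?thesis unfolding is_center_def yy_equipartition_def by blast
  qed
qed

end
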